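(* Let $p>q\geq 2$ be relatively prime integers with $p\geq 2q-1$, and let $k>0$ be an integer. Then there exists a finite union of intervals $I\subseteq[0,1)$ of total length at most $(q/p)^k$ such that $Z_{p/q}(I)\neq\emptyset$.
   Context: For $x\in\mathbb{R}$, $\{x\}=x-\lfloor x\rfloor$ denotes the fractional part. For relatively prime integers $p>q>1$ and $S\subseteq[0,1)$, $Z_{p/q}(S)=\{\xi>0 \mid \{\xi (p/q)^i\}\in S \text{ for every } i\in\mathbb{N}\}$, where $\mathbb{N}=\{0,1,2,\dots\}$. *)

theory Defs
  imports "HOL-Analysis.Analysis"
begin

definition frac_part :: "real \<Rightarrow> real" where
  "frac_part x = x - real_of_int \<lfloor>x\<rfloor>"

definition Z_set :: "int \<Rightarrow> int \<Rightarrow> real set \<Rightarrow> real set" where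
  "Z_set p q S = {\<xi>. \<xi> > 0 \<and> (\<forall>i::nat. frac_part (\<xi> * (real_of_int p / real_of_int q) ^ i) \<in> S)}"

definition interval_length :: "real set \<Rightarrow> real" where
  "interval_length J = (if J = {} then 0 else Sup J - Inf J)"

end

theory Submission
  imports Defs
begin

text \<open>
  Let \<open>M 0 = 1\<close> and \<open>M (n+1) = \<lceil>p M n / q\<rceil>\<close>, so that \<open>q M (n+1) = p M n + d n\<close>
  with digits \<open>0 \<le> d n < q\<close>. The numbers \<open>M n (q/p)\<^sup>n\<close> increase to a limit \<open>y\<close>;
  since the digits are below \<open>q\<close>, the remaining increase after step \<open>n\<close> is at most
  \<open>(q-1)/(p-q) (q/p)\<^sup>n\<close>, and \<open>(q-1)/(p-q) \<le> 1\<close> is exactly \<open>p \<ge> 2q - 1\<close>. Hence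
  \<open>M n \<le> y (p/q)\<^sup>n \<le> M n + 1\<close>. For \<open>\<xi> = y / q\<^sup>k\<close> the number \<open>p\<^sup>k \<xi> (p/q)\<^sup>i\<close> lies in
  \<open>[M (i+k), M (i+k) + 1]\<close>, so the fractional part of \<open>\<xi> (p/q)\<^sup>i\<close> is 0 or lies in the
  interval of length \<open>p\<^sup>-\<^sup>k\<close> indexed by \<open>M (i+k) mod p\<^sup>k\<close>. As \<open>p\<close> and \<open>q\<close> are coprime,
  this residue is determined by the \<open>k\<close> digits \<open>d i, \<dots>, d (i+k-1)\<close>, so at most \<open>q\<^sup>k\<close>
  such intervals occur.
\<close>

context
  fixes p q :: int
begin

fun orbit :: "nat \<Rightarrow> int" where
  "orbit 0 = 1"
| "orbit (Suc n) = (p * orbit n + q - 1) div q"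

definition orbit_digit :: "nat \<Rightarrow> int" where
  "orbit_digit n = q * orbit (Suc n) - p * orbit n"

lemma orbit_Suc_eq: "q * orbit (Suc n) = p * orbit n + orbit_digit n"
  by (simp add: orbit_digit_def)

lemma orbit_digit_bounds:
  assumes "q > 0"
  shows "0 \<le> orbit_digit n" and "orbit_digit n < q"
proof -
  define t where "t = p * orbit n + q - 1"
  have "orbit_digit n = q - 1 - t mod q"
    by (simp add: orbit_digit_def t_def minus_mod_eq_mult_div [symmetric])
  moreover have "0 \<le> t mod q" "t mod q < q"
    using assms by simp_all
  ultimately show "0 \<le> orbit_digit n" "orbit_digit n < q"
    by simp_all
qed

lemma orbit_diff_if_digits_agree:
  assumes "\<forall>i<j. orbit_digit (n + i) = orbit_digit (n' + i)"
  shows "q ^ j * (orbit (n + j) - orbit (n' + j)) = p ^ j * (orbit n - orbit n')"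
  using assms
proof (induction j)
  case 0
  then show ?case by simp
next
  case (Suc j)
  have "q ^ Suc j * (orbit (n + Suc j) - orbit (n' + Suc j))
      = q ^ j * (q * orbit (Suc (n + j)) - q * orbit (Suc (n' + j)))"
    by (simp add: algebra_simps)
  also have "\<dots> = p * (q ^ j * (orbit (n + j) - orbit (n' + j)))"
    using Suc.prems by (simp only: orbit_Suc_eq) (simp add: algebra_simps)
  also have "\<dots> = p ^ Suc j * (orbit n - orbit n')"
    using Suc by simp
  finally show ?case .
qed

lemma orbit_mod_if_digits_agree:
  assumes "coprime p q" and "\<forall>i<K. orbit_digit (n + i) = orbit_digit (n' + i)"
  shows "orbit (n + K) mod p ^ K = orbit (n' + K) mod p ^ K"
proof -
  have "p ^ K dvd q ^ K * (orbit (n + K) - orbit (n' + K))"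
    using orbit_diff_if_digits_agree [OF assms(2)] by simp
  moreover have "coprime (p ^ K) (q ^ K)"
    using assms(1) by simp
  ultimately have "p ^ K dvd orbit (n + K) - orbit (n' + K)"
    using coprime_dvd_mult_right_iff by blast
  then show ?thesis
    by (simp add: mod_eq_dvd_iff)
qed

lemma card_orbit_residues:
  assumes "coprime p q" and "q > 0"
  shows "finite (range (\<lambda>n. orbit (n + K) mod p ^ K))"
    and "card (range (\<lambda>n. orbit (n + K) mod p ^ K)) \<le> nat q ^ K"
proof -
  define res where "res n = orbit (n + K) mod p ^ K" for n
  define word where "word n = restrict (\<lambda>i. orbit_digit (n + i)) {..<K}" for n
  define W where "W = PiE {..<K} (\<lambda>_. {0..<q})"
  have words: "range word \<subseteq> W"
    unfolding W_def word_def using orbit_digit_bounds [OF assms(2)]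
    by (intro image_subsetI, subst restrict_PiE_iff) auto
  have finite_W: "finite W" and card_W: "card W = nat q ^ K"
    by (simp_all add: W_def finite_PiE card_PiE)
  have res_word: "res n = res n'" if "word n = word n'" for n n'
  proof -
    have "\<forall>i<K. orbit_digit (n + i) = orbit_digit (n' + i)"
      using fun_cong [OF that] by (metis lessThan_iff restrict_apply' word_def)
    then show ?thesis
      unfolding res_def by (rule orbit_mod_if_digits_agree [OF assms(1)])
  qed
  have "range res \<subseteq> (res \<circ> inv word) ` range word"
  proof (rule image_subsetI)
    fix n
    have "word (inv word (word n)) = word n"
      by (rule f_inv_into_f) simp
    then have "res n = (res \<circ> inv word) (word n)"
      using res_word by (metis comp_apply)
    then show "res n \<in> (res \<circ> inv word) ` range word"
      by blast
  qed
  moreover have "finite (range word)"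
    using finite_W words finite_subset by blast
  ultimately have "finite (range res)" and "card (range res) \<le> card (range word)"
    using card_image_le [of "range word" "res \<circ> inv word"]
    by (auto dest: finite_subset card_mono [rotated])
  moreover have "card (range word) \<le> card W"
    using finite_W words by (rule card_mono)
  ultimately show "finite (range res)" "card (range res) \<le> nat q ^ K"
    using card_W by simp_all
qed

definition scaled_orbit :: "nat \<Rightarrow> real" where
  "scaled_orbit n = orbit n * (q / p) ^ n"

lemma scaled_orbit_Suc:
  assumes "p \<noteq> 0"
  shows "scaled_orbit (Suc n) = scaled_orbit n + orbit_digit n / p * (q / p) ^ n"
proof -
  have "scaled_orbit (Suc n) = real_of_int (q * orbit (Suc n)) / p * (q / p) ^ n"
    by (simp add: scaled_orbit_def)
  also have "\<dots> = real_of_int (p * orbit n + orbit_digit n) / p * (q / p) ^ n"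
    by (simp only: orbit_Suc_eq)
  also have "\<dots> = scaled_orbit n + orbit_digit n / p * (q / p) ^ n"
    using assms by (simp add: scaled_orbit_def field_simps)
  finally show ?thesis .
qed

lemma incseq_scaled_orbit:
  assumes "0 < q" and "0 < p"
  shows "incseq scaled_orbit"
proof (rule incseq_SucI)
  fix n
  show "scaled_orbit n \<le> scaled_orbit (Suc n)"
    using scaled_orbit_Suc [of n] orbit_digit_bounds(1) [of n] assms by simp
qed

lemma decseq_scaled_orbit_plus:
  assumes "0 < q" and "q < p"
  defines "c \<equiv> (q - 1) / (p - q)"
  shows "decseq (\<lambda>n. scaled_orbit n + c * (q / p) ^ n)"
proof (rule decseq_SucI)
  fix n
  have "c * (p - q) = q - 1"
    using assms(2) by (simp add: c_def)
  then have "c - c * (q / p) = (q - 1) / p"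
    using assms(1,2) by (simp add: field_simps)
  moreover have "orbit_digit n / p \<le> (q - 1) / p"
  proof -
    have "orbit_digit n \<le> q - 1"
      using orbit_digit_bounds(2) [OF assms(1), of n] by simp
    then show ?thesis
      using assms(1,2) by (intro divide_right_mono) simp_all
  qed
  ultimately have "orbit_digit n / p + c * (q / p) \<le> c"
    by linarith
  then have "(orbit_digit n / p + c * (q / p)) * (q / p) ^ n \<le> c * (q / p) ^ n"
    using assms(1,2) by (intro mult_right_mono) simp_all
  then show "scaled_orbit (Suc n) + c * (q / p) ^ Suc n \<le> scaled_orbit n + c * (q / p) ^ n"
    using assms(1,2) by (simp add: scaled_orbit_Suc algebra_simps)
qed

definition orbit_limit :: real where
  "orbit_limit = (SUP n. scaled_orbit n)"

lemma orbit_limit_bounds: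
  assumes "0 < q" and "q < p"
  shows "scaled_orbit n \<le> orbit_limit"
    and "orbit_limit \<le> scaled_orbit n + (q - 1) / (p - q) * (q / p) ^ n"
proof -
  define t where "t m = scaled_orbit m + (q - 1) / (p - q) * (q / p) ^ m" for m
  have "scaled_orbit m \<le> t n" for m
  proof -
    have "scaled_orbit m \<le> scaled_orbit (max m n)"
      using incseq_scaled_orbit assms by (simp add: incseq_def)
    also have "\<dots> \<le> t (max m n)"
      using assms by (simp add: t_def)
    also have "\<dots> \<le> t n"
      using decseq_scaled_orbit_plus [OF assms] by (simp add: t_def decseq_def)
    finally show ?thesis .
  qed
  then have "bdd_above (range scaled_orbit)"
    by (intro bdd_aboveI2)
  then show "scaled_orbit n \<le> orbit_limit"
    by (simp add: orbit_limit_def cSUP_upper)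
  show "orbit_limit \<le> t n"
    using \<open>\<And>m. scaled_orbit m \<le> t n\<close> by (simp add: orbit_limit_def cSUP_least)
qed

lemma orbit_limit_rescaled_bounds:
  assumes "0 < q" and "q < p" and "2 * q - 1 \<le> p"
  shows "orbit n \<le> orbit_limit * (p / q) ^ n"
    and "orbit_limit * (p / q) ^ n \<le> orbit n + 1"
proof -
  have r: "(q / p) ^ n > 0" and rescale: "(q / p) ^ n * (p / q) ^ n = 1"
    using assms by (simp_all add: power_mult_distrib [symmetric])
  have "0 \<le> (q - 1) / (p - q)" and "(q - 1) / (p - q) \<le> (1 :: real)"
    using assms by simp_all
  then have "(q - 1) / (p - q) * (q / p) ^ n \<le> (q / p) ^ n"
    using r by (intro mult_left_le_one_le) simp_all
  then have "orbit_limit \<le> (orbit n + 1) * (q / p) ^ n"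
    using orbit_limit_bounds(2) [of n] assms
    by (simp add: scaled_orbit_def distrib_right)
  moreover have "orbit n * (q / p) ^ n \<le> orbit_limit"
    using orbit_limit_bounds(1) [of n] assms by (simp add: scaled_orbit_def)
  ultimately show "orbit n \<le> orbit_limit * (p / q) ^ n"
    and "orbit_limit * (p / q) ^ n \<le> orbit n + 1"
    using assms rescale
    by (simp_all add: field_simps power_divide)
qed

end

definition cell :: "int \<Rightarrow> int \<Rightarrow> real set" where
  "cell N d = {d / N .. (d + 1) / N} \<inter> {..<1}"

lemma interval_length_le:
  assumes "J \<subseteq> {a..b}" and "a \<le> b"
  shows "interval_length J \<le> b - a"
proof (cases "J = {}")
  case False
  have "Sup J \<le> b" and "a \<le> Inf J"
    using assms False by (auto intro!: cSup_least cInf_greatest)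
  then show ?thesis
    using False by (simp add: interval_length_def)
qed (simp add: interval_length_def assms)

lemma is_interval_cell: "is_interval (cell N d)"
  by (simp add: cell_def is_interval_Int is_interval_io)

lemma cell_subset:
  assumes "0 < N" and "0 \<le> d"
  shows "cell N d \<subseteq> {0..<1}"
  using assms by (auto simp: cell_def) (meson divide_nonneg_pos of_int_0_le_iff of_int_0_less_iff order_trans)

lemma interval_length_cell:
  assumes "0 < N"
  shows "interval_length (cell N d) \<le> 1 / N"
proof -
  have "interval_length (cell N d) \<le> (d + 1) / N - d / N"
    using assms by (intro interval_length_le) (auto simp: cell_def divide_right_mono)
  then show ?thesis
    using assms by (simp add: field_simps)
qed

lemma frac_part_in_cell:
  fixes z :: real and M N :: int
  assumes "0 < N" and "M \<le> N * z" and "N * z \<le> M + 1"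
  shows "frac_part z \<in> insert 0 (cell N (M mod N))"
proof -
  define t where "t = M div N"
  define d where "d = M mod N"
  define u where "u = z - t"
  have "M = N * t + d"
    by (simp add: t_def d_def)
  then have "d \<le> N * u" and "N * u \<le> d + 1"
    using assms(2,3) by (simp_all add: u_def algebra_simps)
  then have u_cell: "d / N \<le> u" "u \<le> (d + 1) / N"
    using assms(1) by (simp_all add: field_simps)
  have "0 \<le> d" and "d < N"
    using assms(1) by (simp_all add: d_def)
  then have "0 \<le> d / N" and "(d + 1) / N \<le> (1 :: real)"
    using assms(1) by (simp_all add: divide_le_eq_1)
  then have "0 \<le> u" and "u \<le> 1"
    using u_cell by linarith+
  show ?thesis
  proof (cases "u < 1")
    case True
    then have "\<lfloor>z\<rfloor> = t"
      using \<open>0 \<le> u\<close> by (simp add: u_def floor_eq_iff)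
    then show ?thesis
      using True u_cell by (simp add: frac_part_def cell_def u_def d_def)
  next
    case False
    then have "z = of_int (t + 1)"
      using \<open>u \<le> 1\<close> by (simp add: u_def)
    then show ?thesis
      by (simp only: frac_part_def floor_of_int) simp
  qed
qed

lemma sum_interval_length_cells:
  assumes "finite R" and "0 < N"
  shows "(\<Sum>J\<in>insert {0} (cell N ` R). interval_length J) \<le> card R / N"
proof -
  have "(\<Sum>J\<in>insert {0} (cell N ` R). interval_length J) = (\<Sum>J\<in>cell N ` R. interval_length J)"
    using assms(1) by (simp add: sum.insert_if interval_length_def [of "{0}"])
  also have "\<dots> \<le> card (cell N ` R) * (1 / N)"
    using interval_length_cell [OF assms(2)] by (intro sum_bounded_above) auto
  also have "\<dots> \<le> card R * (1 / N)"
    using assms by (intro mult_right_mono) (simp_all add: card_image_le)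
  finally show ?thesis
    by simp
qed

definition orbit_cells :: "int \<Rightarrow> int \<Rightarrow> nat \<Rightarrow> real set set" where
  "orbit_cells p q K = insert {0} (cell (p ^ K) ` range (\<lambda>n. orbit p q (n + K) mod p ^ K))"

lemma orbit_cells_intervals:
  assumes "0 < p" and "J \<in> orbit_cells p q K"
  shows "is_interval J" and "J \<subseteq> {0..<1}"
proof -
  have N: "0 < p ^ K"
    using assms(1) by simp
  show "is_interval J" "J \<subseteq> {0..<1}"
    using assms(2) cell_subset [OF N pos_mod_sign [OF N]] is_interval_cell is_interval_1 [of "{0}"]
    by (auto simp: orbit_cells_def)
qed

lemma finite_orbit_cells:
  assumes "coprime p q" and "0 < q"
  shows "finite (orbit_cells p q K)"
  using card_orbit_residues(1) [OF assms] by (simp add: orbit_cells_def)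

lemma sum_interval_length_orbit_cells:
  assumes "coprime p q" and "0 < q" and "0 < p"
  shows "(\<Sum>J\<in>orbit_cells p q K. interval_length J) \<le> (q / p) ^ K"
proof -
  define R where "R = range (\<lambda>n. orbit p q (n + K) mod p ^ K)"
  have "real (card R) \<le> real (nat q ^ K)"
    using card_orbit_residues(2) [OF assms(1,2)] by (simp only: R_def of_nat_le_iff)
  also have "\<dots> = real_of_int q ^ K"
    using assms(2) by simp
  finally have card_R: "real (card R) \<le> real_of_int q ^ K" .
  have "(\<Sum>J\<in>orbit_cells p q K. interval_length J) \<le> card R / real_of_int (p ^ K)"
    unfolding orbit_cells_def R_def [symmetric]
    using card_orbit_residues(1) [OF assms(1,2)] assms(3)
    by (intro sum_interval_length_cells) (simp_all add: R_def)
  also have "\<dots> \<le> (q / p) ^ K"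
    unfolding of_int_power power_divide using card_R assms(3) by (simp add: divide_right_mono)
  finally show ?thesis .
qed

lemma orbit_limit_in_Z_set:
  assumes "0 < q" and "q < p" and "2 * q - 1 \<le> p"
  shows "orbit_limit p q / q ^ K \<in> Z_set p q (\<Union>(orbit_cells p q K))"
proof -
  have "0 < orbit_limit p q"
    using orbit_limit_bounds(1) [of q p 0] assms(1,2) by (simp add: scaled_orbit_def)
  moreover have "frac_part (orbit_limit p q / q ^ K * (p / q) ^ i) \<in> \<Union>(orbit_cells p q K)" for i
  proof -
    have "p ^ K * (orbit_limit p q / q ^ K * (p / q) ^ i) = orbit_limit p q * (p / q) ^ (i + K)"
      by (simp add: power_add power_divide ac_simps)
    then have "frac_part (orbit_limit p q / q ^ K * (p / q) ^ i)
        \<in> insert 0 (cell (p ^ K) (orbit p q (i + K) mod p ^ K))"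
      using orbit_limit_rescaled_bounds [of q p "i + K"] assms
      by (intro frac_part_in_cell) simp_all
    then show ?thesis
      by (auto simp: orbit_cells_def)
  qed
  ultimately show ?thesis
    using assms(1) by (simp add: Z_set_def)
qed

theorem theorem2:
  fixes p q k :: int
  assumes "p > q" and "q \<ge> 2" and "coprime p q" and "p \<ge> 2 * q - 1" and "k > 0"
  shows "\<exists>F :: real set set. finite F \<and> (\<forall>J\<in>F. is_interval J \<and> J \<subseteq> {0..<1})
           \<and> (\<Sum>J\<in>F. interval_length J) \<le> (real_of_int q / real_of_int p) ^ nat k
           \<and> Z_set p q (\<Union>F) \<noteq> {}"
proof (intro exI conjI ballI)
  let ?F = "orbit_cells p q (nat k)"
  have "0 < q" and "0 < p"
    using assms(1,2) by simp_all
  then show "finite ?F"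
    and "\<And>J. J \<in> ?F \<Longrightarrow> is_interval J"
    and "\<And>J. J \<in> ?F \<Longrightarrow> J \<subseteq> {0..<1}"
    and "(\<Sum>J\<in>?F. interval_length J) \<le> (q / p) ^ nat k"
    using finite_orbit_cells orbit_cells_intervals sum_interval_length_orbit_cells assms(3)
    by blast+
  show "Z_set p q (\<Union>?F) \<noteq> {}"
    using orbit_limit_in_Z_set [of q p "nat k"] \<open>0 < q\<close> assms(1,4) by blast
qed

end
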